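(* Let $n\ge4$. For every pseudo-composition $\alpha$ of $n$, \[ r^D_\alpha=\sum_{\beta\preccurlyeq\alpha}(-1)^{\ell(\alpha)-\ell(\beta)}\nu(\beta), \] where the sum is over pseudo-compositions $\beta=(\beta_1,\ldots,\beta_\ell)$ of $n$ with $D(\beta)\subseteq D(\alpha)$, and \[ \nu(\beta):=\begin{cases} 2^{n-1}\binom{n}{\beta_1,\ldots,\beta_\ell} & \text{if } \beta_1=0,\\ 2^{n-1}\binom{n}{1+\beta_2,\beta_3,\ldots,\beta_\ell} & \text{if }\beta_1=1,\\ 2^{n-\beta_1}\binom{n}{\beta_1,\ldots,\beta_\ell} & \text{if } 1<\beta_1\le n.\end{cases} \]
   Context: A signed permutation of $[n]$ is a bijection $w$ of $\{\pm1,\ldots,\pm n\}$ with $w(-i)=-w(i)$; it is even if an even number of $w(1),\ldots,w(n)$ are negative. The even signed permutations form the group $\mathfrak{S}^D_n$. For $w\in\mathfrak{S}^D_n$, with the convention $w(0):=-w(2)$, the descent set is $D(w)=\{i\in\{0,1,\ldots,n-1\}: w(i)>w(i+1)\}$. A pseudo-composition of $n$ ($\alpha\models_0 n$) is a sequence $(\alpha_1,\ldots,\alpha_\ell)$ of integers with $\alpha_1\ge0$, $\alpha_2,\ldots,\alpha_\ell>0$ and sum $n$; its length is $\ell(\alpha)=\ell$ and $D(\alpha)=\{\alpha_1,\alpha_1+\alpha_2,\ldots,\alpha_1+\cdots+\alpha_{\ell-1}\}$. The type $D$ ribbon number is $r^D_\alpha=|\{w\in\mathfrak{S}^D_n: D(w)=D(\alpha)\}|$.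 *)

theory Defs
  imports Main
begin

definition pm_set :: "nat \<Rightarrow> int set" where
  "pm_set n = {-int n..int n} - {0}"

text \<open>Signed permutations of [n]: bijections w of {+-1,...,+-n} with w(-i) = -w(i).
  To obtain a finite set of functions int => int, w is normalised to be the identity
  outside {+-1,...,+-n}.\<close>
definition signed_perms :: "nat \<Rightarrow> (int \<Rightarrow> int) set" where
  "signed_perms n = {w. bij_betw w (pm_set n) (pm_set n)
                        \<and> (\<forall>i\<in>pm_set n. w (-i) = - w i)
                        \<and> (\<forall>x. x \<notin> pm_set n \<longrightarrow> w x = x)}"

definition even_signed_perms :: "nat \<Rightarrow> (int \<Rightarrow> int) set" where
  "even_signed_perms n = {w \<in> signed_perms n. even (card {i\<in>{1..n}. w (int i) < 0})}"

definition wD :: "(int \<Rightarrow> int) \<Rightarrow> nat \<Rightarrow> int" where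
  "wD w i = (if i = 0 then - w 2 else w (int i))"

definition descD :: "nat \<Rightarrow> (int \<Rightarrow> int) \<Rightarrow> nat set" where
  "descD n w = {i \<in> {0..<n}. wD w i > wD w (i + 1)}"

definition pseudo_comp :: "nat \<Rightarrow> nat list \<Rightarrow> bool" where
  "pseudo_comp n \<alpha> \<longleftrightarrow> \<alpha> \<noteq> [] \<and> (\<forall>x\<in>set (tl \<alpha>). x > 0) \<and> sum_list \<alpha> = n"

definition Dcomp :: "nat list \<Rightarrow> nat set" where
  "Dcomp \<alpha> = {sum_list (take k \<alpha>) | k. 1 \<le> k \<and> k < length \<alpha>}"

definition ribbonD :: "nat \<Rightarrow> nat list \<Rightarrow> nat" where
  "ribbonD n \<alpha> = card {w \<in> even_signed_perms n. descD n w = Dcomp \<alpha>}"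

definition multinom :: "nat list \<Rightarrow> nat" where
  "multinom ks = fact (sum_list ks) div prod_list (map fact ks)"

definition nu :: "nat \<Rightarrow> nat list \<Rightarrow> nat" where
  "nu n \<beta> = (if hd \<beta> = 0 then 2 ^ (n - 1) * multinom \<beta>
             else if hd \<beta> = 1 then 2 ^ (n - 1) * multinom ((1 + hd (tl \<beta>)) # tl (tl \<beta>))
             else 2 ^ (n - hd \<beta>) * multinom \<beta>)"

end

theory Submission
  imports Defs
begin

text \<open>
  By Moebius inversion on the subsets of \<open>D(\<alpha>)\<close> it suffices to show that \<open>\<nu>(\<beta>)\<close> even
  signed permutations have their descent set inside \<open>D(\<beta>)\<close>. A signed permutation is
  encoded by its word \<open>w(1) \<dots> w(n)\<close>, a list of signed letters whose absolute values are
  \<open>1, \<dots>, n\<close>. Negating the letter \<open>\<plusminus>1\<close> changes no comparison that matters for descents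
  (nor the sign of \<open>w(1) + w(2)\<close>) but changes the parity of the number of negative
  letters, so exactly half of the words with descents inside \<open>D(\<beta>)\<close> are even.

  These words are counted block by block along \<open>\<beta>\<close>: a block is an increasing word on a
  chosen set of letters, with \<open>2^\<beta>\<^sub>i\<close> sign patterns, which gives \<open>2^n\<close> times the
  multinomial coefficient. The first block also has to satisfy the type D condition
  \<open>w(1) + w(2) > 0\<close>. For \<open>\<beta>\<^sub>1 = 0\<close> it is void. For \<open>\<beta>\<^sub>1 = 1\<close>, negating the first letter
  turns it into an ascent, which merges the first two blocks. For \<open>\<beta>\<^sub>1 \<ge> 2\<close> an increasing
  block satisfies it for exactly two of its sign patterns: none of the letters negated, or
  only the smallest one.
\<close>

section \<open>Descent sets of pseudo-compositions\<close>

lemma Dcomp_eq_image: "Dcomp xs = (\<lambda>j. sum_list (take j xs)) ` {1..<length xs}"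
  by (auto simp: Dcomp_def)

lemma Dcomp_singleton: "Dcomp [k] = {}"
  by (simp add: Dcomp_def)

lemma Dcomp_Cons: "ks \<noteq> [] \<Longrightarrow> Dcomp (k # ks) = insert k ((+) k ` Dcomp ks)"
proof -
  assume "ks \<noteq> []"
  then have "{0..<length ks} = insert 0 {1..<length ks}" by auto
  then have "Dcomp (k # ks) = (\<lambda>j. k + sum_list (take j ks)) ` insert 0 {1..<length ks}"
    unfolding Dcomp_eq_image by (simp add: image_Suc_atLeastLessThan[symmetric] image_image
        del: image_Suc_atLeastLessThan)
  then show ?thesis by (simp add: Dcomp_eq_image image_image)
qed

lemma Dcomp_Cons_Cons: "Dcomp (a # b # ks) = insert a (Dcomp ((a + b) # ks))"
  by (cases "ks = []") (auto simp: Dcomp_Cons Dcomp_singleton image_image add.assoc)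

lemma Dcomp_Cons_ge: "x \<in> Dcomp (k # ks) \<Longrightarrow> k \<le> x"
  by (cases "ks = []") (auto simp: Dcomp_Cons Dcomp_singleton)

lemma Dcomp_snoc: "xs \<noteq> [] \<Longrightarrow> Dcomp (xs @ [c]) = insert (sum_list xs) (Dcomp xs)"
proof -
  assume "xs \<noteq> []"
  then have "1 \<le> length xs" by (cases xs) auto
  then have "{1..<length (xs @ [c])} = insert (length xs) {1..<length xs}" by auto
  moreover have "(\<lambda>j. sum_list (take j (xs @ [c]))) ` {1..<length xs} =
      (\<lambda>j. sum_list (take j xs)) ` {1..<length xs}"
    by (rule image_cong) simp_all
  ultimately show ?thesis
    unfolding Dcomp_eq_image by simp
qed

lemma pseudo_comp_snoc:
  "xs \<noteq> [] \<Longrightarrow> pseudo_comp n (xs @ [c]) \<longleftrightarrow> 0 < c \<and> c \<le> n \<and> pseudo_comp (n - c) xs"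
  by (cases xs) (auto simp: pseudo_comp_def)

lemma Dcomp_subset:
  "pseudo_comp n \<beta> \<Longrightarrow> Dcomp \<beta> \<subseteq> {0..<n}"
proof (induction \<beta> arbitrary: n rule: rev_induct)
  case (snoc c xs)
  show ?case
  proof (cases "xs = []")
    case True
    then show ?thesis by (simp add: Dcomp_singleton)
  next
    case False
    with snoc.prems have c: "0 < c" "c \<le> n" and xs: "pseudo_comp (n - c) xs"
      by (simp_all add: pseudo_comp_snoc)
    then have "sum_list xs = n - c" by (simp add: pseudo_comp_def)
    with False c snoc.IH[OF xs] show ?thesis by (auto simp: Dcomp_snoc)
  qed
qed (simp add: Dcomp_def)

lemma card_Dcomp: "pseudo_comp n \<beta> \<Longrightarrow> card (Dcomp \<beta>) = length \<beta> - 1"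
proof (induction \<beta> arbitrary: n rule: rev_induct)
  case (snoc c xs)
  show ?case
  proof (cases "xs = []")
    case True
    then show ?thesis by (simp add: Dcomp_singleton)
  next
    case False
    with snoc.prems have xs: "pseudo_comp (n - c) xs" by (simp add: pseudo_comp_snoc)
    then have "sum_list xs \<notin> Dcomp xs" "finite (Dcomp xs)"
      using Dcomp_subset[OF xs] by (auto simp: pseudo_comp_def dest: finite_subset)
    with False snoc.IH[OF xs] show ?thesis by (simp add: Dcomp_snoc)
  qed
qed (simp add: pseudo_comp_def)

lemma card_Dcomp_diff:
  assumes "pseudo_comp n \<alpha>" and "pseudo_comp m \<beta>"
  shows "card (Dcomp \<alpha>) - card (Dcomp \<beta>) = length \<alpha> - length \<beta>"
  using card_Dcomp[OF assms(1)] card_Dcomp[OF assms(2)] assms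
  by (cases \<alpha>; cases \<beta>) (auto simp: pseudo_comp_def)

lemma insert_eq_insert_below:
  fixes a b :: nat
  assumes "insert a A = insert b B" and "A \<subseteq> {0..<a}" and "B \<subseteq> {0..<b}"
  shows "a = b \<and> A = B"
proof -
  have "a \<in> insert b B" "b \<in> insert a A" using assms(1) by blast+
  then have "a \<le> b" "b \<le> a" using assms(2,3) by auto
  then have "a = b" by simp
  moreover have "A = insert a A - {a}" "B = insert b B - {b}" using assms(2,3) by auto
  ultimately show ?thesis using assms(1) by blast
qed

lemma Dcomp_inj:
  "pseudo_comp n \<beta> \<Longrightarrow> pseudo_comp n \<gamma> \<Longrightarrow> Dcomp \<beta> = Dcomp \<gamma> \<Longrightarrow> \<beta> = \<gamma>"
proof (induction \<beta> arbitrary: n \<gamma> rule: rev_induct)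
  case (snoc c xs)
  have "length (xs @ [c]) = length \<gamma>"
    using card_Dcomp[OF snoc.prems(1)] card_Dcomp[OF snoc.prems(2)] snoc.prems(3)
      snoc.prems(2) by (cases \<gamma>) (auto simp: pseudo_comp_def)
  then obtain ys d where \<gamma>: "\<gamma> = ys @ [d]" and "length ys = length xs"
    by (cases \<gamma> rule: rev_cases) auto
  show ?case
  proof (cases "xs = []")
    case True
    with snoc.prems \<gamma> \<open>length ys = length xs\<close> show ?thesis by (simp add: pseudo_comp_def)
  next
    case False
    then have "ys \<noteq> []" using \<open>length ys = length xs\<close> by auto
    have xs: "pseudo_comp (n - c) xs" and ys: "pseudo_comp (n - d) ys"
      using snoc.prems(1,2) False \<open>ys \<noteq> []\<close> \<gamma> by (simp_all add: pseudo_comp_snoc)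
    then have "sum_list xs = n - c" "sum_list ys = n - d"
      by (simp_all add: pseudo_comp_def)
    moreover have "insert (sum_list xs) (Dcomp xs) = insert (sum_list ys) (Dcomp ys)"
      using snoc.prems(3) False \<open>ys \<noteq> []\<close> \<gamma> by (simp add: Dcomp_snoc)
    ultimately have "n - c = n - d \<and> Dcomp xs = Dcomp ys"
      using insert_eq_insert_below Dcomp_subset[OF xs] Dcomp_subset[OF ys] by simp
    then have "xs = ys" using snoc.IH[OF xs, of ys] ys by simp
    moreover have "sum_list (xs @ [c]) = sum_list (ys @ [d])"
      using snoc.prems(1,2) \<gamma> unfolding pseudo_comp_def by argo
    ultimately show ?thesis using \<gamma> by simp
  qed
qed (simp add: pseudo_comp_def)

lemma Dcomp_surj: "T \<subseteq> {0..<n} \<Longrightarrow> \<exists>\<beta>. pseudo_comp n \<beta> \<and> Dcomp \<beta> = T"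
proof (induction n arbitrary: T rule: less_induct)
  case (less n)
  show ?case
  proof (cases "T = {}")
    case True
    then have "pseudo_comp n [n] \<and> Dcomp [n] = T" by (simp add: pseudo_comp_def Dcomp_singleton)
    then show ?thesis by blast
  next
    case False
    have "finite T" using less.prems finite_subset by blast
    define m where "m = Max T"
    have "m \<in> T" "m < n" using \<open>finite T\<close> False less.prems by (auto simp: m_def)
    moreover have "T - {m} \<subseteq> {0..<m}"
      using \<open>finite T\<close> by (auto simp: m_def less_le)
    ultimately obtain \<beta> where \<beta>: "pseudo_comp m \<beta>" "Dcomp \<beta> = T - {m}"
      using less.IH by blast
    then have "\<beta> \<noteq> []" "sum_list \<beta> = m" by (simp_all add: pseudo_comp_def)
    then have "pseudo_comp n (\<beta> @ [n - m]) \<and> Dcomp (\<beta> @ [n - m]) = T"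
      using \<beta> \<open>m \<in> T\<close> \<open>m < n\<close> by (auto simp: pseudo_comp_snoc Dcomp_snoc)
    then show ?thesis by blast
  qed
qed

lemma bij_betw_Dcomp:
  assumes "T \<subseteq> {0..<n}"
  shows "bij_betw Dcomp {\<beta>. pseudo_comp n \<beta> \<and> Dcomp \<beta> \<subseteq> T} (Pow T)"
proof (rule bij_betwI')
  show "Dcomp \<beta> = Dcomp \<gamma> \<longleftrightarrow> \<beta> = \<gamma>"
    if "\<beta> \<in> {\<beta>. pseudo_comp n \<beta> \<and> Dcomp \<beta> \<subseteq> T}" "\<gamma> \<in> {\<beta>. pseudo_comp n \<beta> \<and> Dcomp \<beta> \<subseteq> T}"
    for \<beta> \<gamma>
    using that Dcomp_inj by blast
  show "\<exists>\<beta> \<in> {\<beta>. pseudo_comp n \<beta> \<and> Dcomp \<beta> \<subseteq> T}. S = Dcomp \<beta>" if "S \<in> Pow T" for S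
    using that assms Dcomp_surj[of S n] by fastforce
qed auto

section \<open>Signed arrangements\<close>

definition signed_arrangements :: "int set \<Rightarrow> int list set" where
  "signed_arrangements U = {xs. distinct (map abs xs) \<and> abs ` set xs = U}"

lemma length_signed_arrangement: "xs \<in> signed_arrangements U \<Longrightarrow> length xs = card U"
  unfolding signed_arrangements_def using distinct_card[of "map abs xs"] by auto

lemma signed_arrangements_empty: "signed_arrangements {} = {[]}"
  by (auto simp: signed_arrangements_def)

lemma finite_signed_arrangements:
  assumes "finite U"
  shows "finite (signed_arrangements U)"
proof (rule finite_subset)
  show "signed_arrangements U \<subseteq> {xs. set xs \<subseteq> U \<union> uminus ` U \<and> length xs = card U}"
  proof
    fix xs assume xs: "xs \<in> signed_arrangements U"
    have "set xs \<subseteq> U \<union> uminus ` U"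
    proof
      fix x assume "x \<in> set xs"
      then have "\<bar>x\<bar> \<in> U" using xs by (auto simp: signed_arrangements_def)
      then show "x \<in> U \<union> uminus ` U" by (cases "x \<ge> 0") (auto intro: rev_image_eqI[of "- x"])
    qed
    then show "xs \<in> {xs. set xs \<subseteq> U \<union> uminus ` U \<and> length xs = card U}"
      using length_signed_arrangement[OF xs] by simp
  qed
  show "finite {xs. set xs \<subseteq> U \<union> uminus ` U \<and> length xs = card U}"
    using assms by (intro finite_lists_length_eq) auto
qed

lemma signed_arrangement_nth_nonzero:
  assumes "xs \<in> signed_arrangements U" and "0 \<notin> U" and "i < length xs"
  shows "xs ! i \<noteq> 0"
proof -
  have "\<bar>xs ! i\<bar> \<in> U"
    using assms(1) imageI[OF nth_mem[OF assms(3)], of abs] by (simp add: signed_arrangements_def)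
  with assms(2) show ?thesis by fastforce
qed

lemma signed_arrangement_abs_nth_neq:
  assumes "xs \<in> signed_arrangements U" and "i < length xs" "j < length xs" "i \<noteq> j"
  shows "\<bar>xs ! i\<bar> \<noteq> \<bar>xs ! j\<bar>"
  using assms nth_eq_iff_index_eq[of "map abs xs" i j] by (simp add: signed_arrangements_def)

lemma append_in_signed_arrangements:
  assumes "ys \<in> signed_arrangements A" "zs \<in> signed_arrangements (U - A)" "A \<subseteq> U"
  shows "ys @ zs \<in> signed_arrangements U"
proof -
  have "set (map abs ys) = A" "set (map abs zs) = U - A"
    using assms(1,2) by (simp_all add: signed_arrangements_def)
  then show ?thesis
    using assms unfolding signed_arrangements_def by (auto simp flip: set_map)
qed

lemma take_drop_in_signed_arrangements:
  fixes k :: nat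
  assumes "xs \<in> signed_arrangements U"
  defines "A \<equiv> abs ` set (take k xs)"
  shows "take k xs \<in> signed_arrangements A" and "drop k xs \<in> signed_arrangements (U - A)"
    and "A \<subseteq> U"
proof -
  have "distinct (map abs (take k xs) @ map abs (drop k xs))"
    using assms by (simp add: signed_arrangements_def flip: map_append)
  moreover have "U = A \<union> abs ` set (drop k xs)"
    using assms by (simp add: signed_arrangements_def flip: image_Un set_append)
  ultimately show "take k xs \<in> signed_arrangements A" "drop k xs \<in> signed_arrangements (U - A)"
    "A \<subseteq> U"
    by (auto simp: signed_arrangements_def A_def)
qed

lemma signed_arrangements_split:
  fixes k :: nat
  assumes "k \<le> card U"
  shows "{xs \<in> signed_arrangements U. P (take k xs) \<and> Q (drop k xs)} =
    (\<Union>A \<in> {A. A \<subseteq> U \<and> card A = k}. (\<lambda>(ys, zs). ys @ zs) `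
      ({ys \<in> signed_arrangements A. P ys} \<times> {zs \<in> signed_arrangements (U - A). Q zs}))"
    (is "?L = (\<Union>A \<in> ?K. ?S A)")
proof (intro equalityI subsetI)
  fix xs assume xs: "xs \<in> ?L"
  let ?A = "abs ` set (take k xs)"
  note td = take_drop_in_signed_arrangements[of xs U k]
  have "card ?A = k"
    using length_signed_arrangement[OF td(1)] length_signed_arrangement[of xs U] xs assms
    by auto
  moreover have "xs \<in> ?S ?A"
    using td xs by (intro image_eqI[of _ _ "(take k xs, drop k xs)"]) auto
  ultimately show "xs \<in> (\<Union>A\<in>?K. ?S A)" using td xs by blast
next
  fix xs assume "xs \<in> (\<Union>A\<in>?K. ?S A)"
  then show "xs \<in> ?L"
    by (auto simp: append_in_signed_arrangements dest: length_signed_arrangement)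
qed

lemma card_signed_arrangements_split:
  assumes "finite U" and "k \<le> card U"
  shows "card {xs \<in> signed_arrangements U. P (take k xs) \<and> Q (drop k xs)} =
    (\<Sum>A | A \<subseteq> U \<and> card A = k.
       card {ys \<in> signed_arrangements A. P ys} * card {zs \<in> signed_arrangements (U - A). Q zs})"
proof -
  let ?K = "{A. A \<subseteq> U \<and> card A = k}"
  let ?S = "\<lambda>A. (\<lambda>(ys, zs). ys @ zs) `
    ({ys \<in> signed_arrangements A. P ys} \<times> {zs \<in> signed_arrangements (U - A). Q zs})"
  have finite_S: "finite (?S A)" if "A \<in> ?K" for A
    using that finite_subset[OF _ assms(1)]
    by (intro finite_imageI finite_cartesian_product finite_subset[OF _ finite_signed_arrangements])
      auto
  have disjoint: "?S A \<inter> ?S B = {}" if "A \<in> ?K" "B \<in> ?K" "A \<noteq> B" for A B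
  proof (rule ccontr)
    assume "?S A \<inter> ?S B \<noteq> {}"
    then obtain x where "x \<in> ?S A" "x \<in> ?S B" by blast
    then obtain ys zs ys' zs' where "ys @ zs = ys' @ zs'"
      and ys: "ys \<in> signed_arrangements A" and ys': "ys' \<in> signed_arrangements B"
      by auto
    moreover have "length ys = length ys'"
      using length_signed_arrangement[OF ys] length_signed_arrangement[OF ys'] that by simp
    ultimately have "ys = ys'" by simp
    with ys ys' \<open>A \<noteq> B\<close> show False by (simp add: signed_arrangements_def)
  qed
  have card_S: "card (?S A) = card {ys \<in> signed_arrangements A. P ys} *
      card {zs \<in> signed_arrangements (U - A). Q zs}" if "A \<in> ?K" for A
  proof -
    have "inj_on (\<lambda>(ys, zs). ys @ zs)
        ({ys \<in> signed_arrangements A. P ys} \<times> {zs \<in> signed_arrangements (U - A). Q zs})"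
      by (auto simp: inj_on_def dest!: length_signed_arrangement)
    then show ?thesis by (simp add: card_image card_cartesian_product)
  qed
  have "finite ?K" using assms(1) by (auto intro: finite_subset[of _ "Pow U"])
  then show ?thesis
    unfolding signed_arrangements_split[OF assms(2)]
    by (subst card_UN_disjoint) (auto simp: finite_S disjoint card_S)
qed

section \<open>Increasing signed arrangements\<close>

lemma bij_betw_set_sorted_signed_arrangements:
  assumes "finite A"
  shows "bij_betw set {xs \<in> signed_arrangements A. sorted_wrt (<) xs}
    {X. inj_on abs X \<and> abs ` X = A}"
proof (rule bij_betw_byWitness[where f' = sorted_list_of_set])
  show "\<forall>xs \<in> {xs \<in> signed_arrangements A. sorted_wrt (<) xs}. sorted_list_of_set (set xs) = xs"
    by (simp add: sorted_list_of_set_sort_remdups strict_sorted_iff distinct_remdups_id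
        sorted_sort_id)
  have "finite X" if "abs ` X = A" "inj_on abs X" for X :: "int set"
    using that assms finite_imageD by blast
  then show "\<forall>X \<in> {X. inj_on abs X \<and> abs ` X = A}. set (sorted_list_of_set X) = X"
    by simp
  show "set ` {xs \<in> signed_arrangements A. sorted_wrt (<) xs} \<subseteq> {X. inj_on abs X \<and> abs ` X = A}"
    by (auto simp: signed_arrangements_def distinct_map)
  show "sorted_list_of_set ` {X. inj_on abs X \<and> abs ` X = A}
      \<subseteq> {xs \<in> signed_arrangements A. sorted_wrt (<) xs}"
    using \<open>\<And>X. abs ` X = A \<Longrightarrow> inj_on abs X \<Longrightarrow> finite X\<close>
    by (auto simp: signed_arrangements_def distinct_map)
qed

lemma abs_signed_subset:
  fixes A :: "int set"
  assumes pos: "\<forall>a\<in>A. 0 < a" and N: "N \<subseteq> A"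
  shows "inj_on abs (uminus ` N \<union> (A - N))" and "abs ` (uminus ` N \<union> (A - N)) = A"
proof -
  have abs_A: "\<bar>a\<bar> = a" if "a \<in> A" for a using pos that by auto
  show "inj_on abs (uminus ` N \<union> (A - N))"
    using abs_A N by (auto simp: inj_on_def) (metis abs_A subsetD)+
  have "abs ` B = B" if "B \<subseteq> A" for B
  proof -
    have "abs ` B = id ` B"
      by (rule image_cong[OF refl]) (use abs_A that in auto)
    then show ?thesis by simp
  qed
  then show "abs ` (uminus ` N \<union> (A - N)) = A"
    using N by (simp add: image_Un image_image Un_absorb1)
qed

lemma signed_subset_of_negatives:
  fixes A :: "int set"
  assumes pos: "\<forall>a\<in>A. 0 < a" and inj: "inj_on abs X" and abs_X: "abs ` X = A"
  shows "uminus ` {a \<in> A. - a \<in> X} \<union> (A - {a \<in> A. - a \<in> X}) = X"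
proof -
  have "x \<in> X \<longleftrightarrow> x \<in> uminus ` {a \<in> A. - a \<in> X} \<union> (A - {a \<in> A. - a \<in> X})" for x
  proof (cases "x < 0")
    case True
    have "x \<in> X \<longleftrightarrow> - x \<in> {a \<in> A. - a \<in> X}"
      using True abs_X by (auto intro: rev_image_eqI[of x])
    moreover have "x \<notin> A" using True pos by auto
    ultimately show ?thesis by (auto simp: image_iff)
  next
    case False
    have "- x \<notin> X" if "x \<in> X" "0 < x"
      using inj that inj_onD[of abs X x "- x"] by auto
    moreover have "x \<in> X" if "x \<in> A" "- x \<notin> X"
    proof -
      obtain y where "y \<in> X" "\<bar>y\<bar> = x" using abs_X \<open>x \<in> A\<close> by blast
      with \<open>- x \<notin> X\<close> show ?thesis by (cases "y < 0") auto
    qed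
    moreover have "x \<in> X \<Longrightarrow> x \<in> A" using abs_X False by force
    moreover have "x \<in> A \<Longrightarrow> 0 < x" using pos by blast
    moreover have "x \<notin> uminus ` {a \<in> A. - a \<in> X}" using False pos by auto
    ultimately show ?thesis by auto
  qed
  then show ?thesis by blast
qed

lemma bij_betw_signed_subsets:
  fixes A :: "int set"
  assumes pos: "\<forall>a\<in>A. 0 < a"
  shows "bij_betw (\<lambda>N. uminus ` N \<union> (A - N)) (Pow A) {X. inj_on abs X \<and> abs ` X = A}"
proof (rule bij_betw_byWitness[where f' = "\<lambda>X. {a \<in> A. - a \<in> X}"])
  have "- a \<notin> A" if "a \<in> A" for a
    using pos that by (metis neg_0_less_iff_less not_less_iff_gr_or_eq)
  then have "- a \<in> uminus ` N \<union> (A - N) \<longleftrightarrow> a \<in> N" if "a \<in> A" for a N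
    using that by (auto simp: image_iff)
  then show "\<forall>N \<in> Pow A. {a \<in> A. - a \<in> uminus ` N \<union> (A - N)} = N"
    by blast
  show "\<forall>X \<in> {X. inj_on abs X \<and> abs ` X = A}.
      uminus ` {a \<in> A. - a \<in> X} \<union> (A - {a \<in> A. - a \<in> X}) = X"
    using signed_subset_of_negatives[OF pos] by blast
  show "(\<lambda>N. uminus ` N \<union> (A - N)) ` Pow A \<subseteq> {X. inj_on abs X \<and> abs ` X = A}"
    using abs_signed_subset[OF pos] by blast
qed auto

lemma card_sorted_signed_arrangements_filter:
  fixes A :: "int set" and P :: "int set \<Rightarrow> bool"
  assumes "finite A" and "\<forall>a\<in>A. 0 < a"
  shows "card {xs \<in> signed_arrangements A. sorted_wrt (<) xs \<and> P (set xs)} =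
    card {N \<in> Pow A. P (uminus ` N \<union> (A - N))}"
proof -
  have "card {xs \<in> signed_arrangements A. sorted_wrt (<) xs \<and> P (set xs)} =
      card {X \<in> {X. inj_on abs X \<and> abs ` X = A}. P X}"
    using bij_betw_Collect[OF bij_betw_set_sorted_signed_arrangements[OF assms(1)],
        where P = "\<lambda>xs. P (set xs)" and Q = P]
    by (auto simp: conj_assoc intro: bij_betw_same_card)
  also have "\<dots> = card {N \<in> Pow A. P (uminus ` N \<union> (A - N))}"
    using bij_betw_Collect[OF bij_betw_signed_subsets[OF assms(2)],
        where P = "\<lambda>N. P (uminus ` N \<union> (A - N))" and Q = P]
    by (auto intro: bij_betw_same_card[symmetric])
  finally show ?thesis .
qed

lemma card_sorted_signed_arrangements:
  fixes A :: "int set"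
  assumes "finite A" and "\<forall>a\<in>A. 0 < a"
  shows "card {xs \<in> signed_arrangements A. sorted_wrt (<) xs} = 2 ^ card A"
  using card_sorted_signed_arrangements_filter[OF assms, of "\<lambda>_. True"] card_Pow[OF assms(1)]
  by (simp only: simp_thms Collect_mem_eq)

lemma sorted_pos_first_sum_iff:
  fixes ys :: "int list"
  assumes "sorted_wrt (<) ys" and "2 \<le> length ys"
  shows "0 < ys ! 0 + ys ! 1 \<longleftrightarrow> (\<forall>x\<in>set ys. \<forall>y\<in>set ys. x \<noteq> y \<longrightarrow> 0 < x + y)"
proof
  have le: "ys ! a \<le> ys ! b" if "a \<le> b" "b < length ys" for a b
    using sorted_wrt_nth_less[OF assms(1), of a b] that by (cases "a = b") auto
  assume "0 < ys ! 0 + ys ! 1"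
  show "\<forall>x\<in>set ys. \<forall>y\<in>set ys. x \<noteq> y \<longrightarrow> 0 < x + y"
  proof (intro ballI impI)
    fix x y assume "x \<in> set ys" "y \<in> set ys" "x \<noteq> y"
    then obtain i j where ij: "i < length ys" "j < length ys" "x = ys ! i" "y = ys ! j" "i \<noteq> j"
      by (metis in_set_conv_nth)
    then have "ys ! 0 + ys ! 1 \<le> x + y"
      using le[of 0 "min i j"] le[of 1 "max i j"] by (cases "i < j") (auto simp: add_mono)
    with \<open>0 < ys ! 0 + ys ! 1\<close> show "0 < x + y" by simp
  qed
next
  assume "\<forall>x\<in>set ys. \<forall>y\<in>set ys. x \<noteq> y \<longrightarrow> 0 < x + y"
  moreover have "ys ! 0 \<in> set ys" "ys ! 1 \<in> set ys" using assms(2) by (auto intro!: nth_mem)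
  moreover have "ys ! 0 < ys ! 1" using sorted_wrt_nth_less[OF assms(1), of 0 1] assms(2) by simp
  ultimately show "0 < ys ! 0 + ys ! 1" by (metis less_irrefl)
qed

lemma signed_subset_pos_sums_iff:
  fixes A :: "int set"
  assumes "finite A" and pos: "\<forall>a\<in>A. 0 < a" and "N \<subseteq> A"
  defines "X \<equiv> uminus ` N \<union> (A - N)"
  shows "(\<forall>x\<in>X. \<forall>y\<in>X. x \<noteq> y \<longrightarrow> 0 < x + y) \<longleftrightarrow> N \<subseteq> {Min A}"
proof
  assume sums: "\<forall>x\<in>X. \<forall>y\<in>X. x \<noteq> y \<longrightarrow> 0 < x + y"
  show "N \<subseteq> {Min A}"
  proof
    fix a assume "a \<in> N"
    then have "a \<in> A" "- a \<in> X" using \<open>N \<subseteq> A\<close> by (auto simp: X_def)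
    then have min: "Min A \<in> A" "Min A \<le> a"
      using Min_in[OF assms(1)] Min_le[OF assms(1)] by auto
    define m where "m = (if Min A \<in> N then - Min A else Min A)"
    have "m \<in> X" "m \<le> Min A" using min pos by (auto simp: X_def m_def)
    show "a \<in> {Min A}"
    proof (rule ccontr)
      assume "a \<notin> {Min A}"
      then have "- a \<noteq> m" using min pos \<open>a \<in> A\<close> by (auto simp: m_def)
      then have "0 < - a + m" using sums[rule_format, OF \<open>- a \<in> X\<close> \<open>m \<in> X\<close>] by blast
      with \<open>m \<le> Min A\<close> \<open>Min A \<le> a\<close> \<open>a \<notin> {Min A}\<close> show False by simp
    qed
  qed
next
  assume N: "N \<subseteq> {Min A}"
  have "0 < x + y" if "x \<in> X" "y \<in> X" "x \<noteq> y" "x \<le> y" for x y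
  proof (cases "0 < x")
    case True
    with that show ?thesis by simp
  next
    case False
    then have "x = - Min A" "Min A \<in> N" using that(1) N pos by (auto simp: X_def)
    then have "y \<in> A - N" using that N by (auto simp: X_def)
    then have "Min A < y"
      using N \<open>Min A \<in> N\<close> assms(1) by (metis Diff_iff Min_le order_le_neq_trans singletonD)
    with \<open>x = - Min A\<close> show ?thesis by simp
  qed
  then show "\<forall>x\<in>X. \<forall>y\<in>X. x \<noteq> y \<longrightarrow> 0 < x + y"
    by (metis add.commute linorder_le_cases)
qed

lemma card_sorted_signed_arrangements_pos_first_sum:
  fixes A :: "int set"
  assumes "finite A" and "\<forall>a\<in>A. 0 < a" and "2 \<le> card A"
  shows "card {xs \<in> signed_arrangements A. sorted_wrt (<) xs \<and> 0 < xs ! 0 + xs ! 1} = 2"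
proof -
  let ?P = "\<lambda>X. \<forall>x\<in>X. \<forall>y\<in>X. x \<noteq> y \<longrightarrow> 0 < x + y"
  have "{xs \<in> signed_arrangements A. sorted_wrt (<) xs \<and> 0 < xs ! 0 + xs ! 1} =
      {xs \<in> signed_arrangements A. sorted_wrt (<) xs \<and> ?P (set xs)}"
  proof (rule Collect_cong, rule conj_cong[OF refl], rule conj_cong[OF refl])
    fix xs assume "xs \<in> signed_arrangements A" "sorted_wrt (<) xs"
    then show "0 < xs ! 0 + xs ! 1 \<longleftrightarrow> ?P (set xs)"
      using sorted_pos_first_sum_iff length_signed_arrangement assms(3) by metis
  qed
  then have "card {xs \<in> signed_arrangements A. sorted_wrt (<) xs \<and> 0 < xs ! 0 + xs ! 1} =
      card {N \<in> Pow A. ?P (uminus ` N \<union> (A - N))}"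
    using card_sorted_signed_arrangements_filter[OF assms(1,2)] by simp
  also have "{N \<in> Pow A. ?P (uminus ` N \<union> (A - N))} = Pow {Min A}"
  proof -
    have "Min A \<in> A" using assms(1,3) by (intro Min_in) auto
    then show ?thesis using signed_subset_pos_sums_iff[OF assms(1,2)] by auto
  qed
  finally show ?thesis by (simp add: card_Pow)
qed

section \<open>Words with descents at prescribed positions\<close>

(* Position \<open>Suc i\<close> is the gap between \<open>xs ! i\<close> and \<open>xs ! Suc i\<close>; for the word of a signed
   permutation these are \<open>w(i + 1)\<close> and \<open>w(i + 2)\<close>, so positions agree with those of \<open>descD\<close>. *)
definition descents_within :: "nat set \<Rightarrow> int list \<Rightarrow> bool" where
  "descents_within S xs \<longleftrightarrow> (\<forall>i. Suc i < length xs \<longrightarrow> Suc i \<notin> S \<longrightarrow> xs ! i < xs ! Suc i)"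

lemma descents_within_empty: "descents_within {} xs \<longleftrightarrow> sorted_wrt (<) xs"
  unfolding descents_within_def using sorted_wrt_iff_nth_Suc_transp[OF transp_on_less, of xs]
  by simp

lemma descents_within_Nil [simp]: "descents_within S []"
  by (simp add: descents_within_def)

lemma descents_within_insert_0: "descents_within (insert 0 S) xs \<longleftrightarrow> descents_within S xs"
  by (simp add: descents_within_def)

lemma descents_within_append_iff:
  assumes "k \<le> length xs"
  shows "descents_within (insert k ((+) k ` S)) xs \<longleftrightarrow>
    sorted_wrt (<) (take k xs) \<and> descents_within S (drop k xs)"
proof
  assume H: "descents_within (insert k ((+) k ` S)) xs"
  have "descents_within {} (take k xs)"
    unfolding descents_within_def
  proof (intro allI impI)
    fix i assume i: "Suc i < length (take k xs)"
    then have "Suc i \<notin> insert k ((+) k ` S)" by auto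
    then show "take k xs ! i < take k xs ! Suc i"
      using H i by (simp add: descents_within_def)
  qed
  moreover have "descents_within S (drop k xs)"
    unfolding descents_within_def
  proof (intro allI impI)
    fix i assume i: "Suc i < length (drop k xs)" "Suc i \<notin> S"
    then have "Suc (k + i) \<notin> insert k ((+) k ` S)" by auto
    then show "drop k xs ! i < drop k xs ! Suc i"
      using H i assms by (simp add: descents_within_def)
  qed
  ultimately show "sorted_wrt (<) (take k xs) \<and> descents_within S (drop k xs)"
    by (simp add: descents_within_empty)
next
  assume "sorted_wrt (<) (take k xs) \<and> descents_within S (drop k xs)"
  then have H1: "descents_within {} (take k xs)" and H2: "descents_within S (drop k xs)"
    by (simp_all add: descents_within_empty)
  show "descents_within (insert k ((+) k ` S)) xs"
    unfolding descents_within_def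
  proof (intro allI impI)
    fix i assume i: "Suc i < length xs" "Suc i \<notin> insert k ((+) k ` S)"
    show "xs ! i < xs ! Suc i"
    proof (cases "Suc i < k")
      case True
      then show ?thesis using H1 i by (simp add: descents_within_def)
    next
      case False
      then have "k \<le> i" using i by auto
      then obtain j where j: "i = k + j" using le_iff_add by blast
      moreover have "Suc j \<notin> S"
        using i j by (metis add_Suc_right image_eqI insertCI)
      ultimately show ?thesis using H2 i assms by (simp add: descents_within_def)
    qed
  qed
qed

lemma descents_within_Dcomp_Cons:
  assumes "length xs = k + sum_list ks"
  shows "descents_within (Dcomp (k # ks)) xs \<longleftrightarrow>
    sorted_wrt (<) (take k xs) \<and> descents_within (Dcomp ks) (drop k xs)"
proof (cases "ks = []")
  case True
  with assms show ?thesis by (simp add: Dcomp_singleton descents_within_empty)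
next
  case False
  with assms show ?thesis by (simp add: Dcomp_Cons descents_within_append_iff)
qed

lemma prod_fact_dvd_fact_sum_list: "prod_list (map fact ks) dvd (fact (sum_list ks) :: nat)"
proof (induction ks)
  case (Cons k ks)
  have "fact (k + sum_list ks) = fact k * fact (sum_list ks) * (k + sum_list ks choose k)"
    using binomial_fact_lemma[of k "k + sum_list ks"] by simp
  with Cons.IH show ?case by (simp add: mult_dvd_mono)
qed simp

lemma multinom_Nil: "multinom [] = 1"
  by (simp add: multinom_def)

lemma multinom_Cons: "multinom (k # ks) = (k + sum_list ks choose k) * multinom ks"
proof -
  obtain q where q: "fact (sum_list ks) = prod_list (map fact ks) * (q :: nat)"
    using prod_fact_dvd_fact_sum_list[of ks] by (elim dvdE)
  have "0 < prod_list (map fact ks :: nat list)"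
    by (induction ks) simp_all
  then have pos: "0 < fact k * prod_list (map fact ks :: nat list)"
    by simp
  have "fact (k + sum_list ks) = fact k * fact (sum_list ks) * (k + sum_list ks choose k)"
    using binomial_fact_lemma[of k "k + sum_list ks"] by simp
  then show ?thesis
    using pos q by (simp add: multinom_def ac_simps)
qed

lemma card_descents_within_Dcomp:
  fixes U :: "int set"
  assumes "finite U" and "\<forall>a\<in>U. 0 < a" and "sum_list ks = card U"
  shows "card {xs \<in> signed_arrangements U. descents_within (Dcomp ks) xs} =
    2 ^ card U * multinom ks"
  using assms
proof (induction ks arbitrary: U)
  case Nil
  then show ?case
    by (simp add: signed_arrangements_empty Dcomp_def multinom_Nil cong: conj_cong)
next
  case (Cons k ks)
  have k: "k \<le> card U" using Cons.prems(3) by simp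
  have "card {xs \<in> signed_arrangements U. descents_within (Dcomp (k # ks)) xs} =
      card {xs \<in> signed_arrangements U. sorted_wrt (<) (take k xs) \<and>
        descents_within (Dcomp ks) (drop k xs)}"
    using descents_within_Dcomp_Cons length_signed_arrangement Cons.prems(3)
    by (metis (no_types, lifting) sum_list.Cons)
  also have "\<dots> = (\<Sum>A | A \<subseteq> U \<and> card A = k.
      card {ys \<in> signed_arrangements A. sorted_wrt (<) ys} *
      card {zs \<in> signed_arrangements (U - A). descents_within (Dcomp ks) zs})"
    by (rule card_signed_arrangements_split[OF Cons.prems(1) k])
  also have "\<dots> = (\<Sum>A | A \<subseteq> U \<and> card A = k. 2 ^ k * (2 ^ (card U - k) * multinom ks))"
  proof (rule sum.cong[OF refl])
    fix A assume A: "A \<in> {A. A \<subseteq> U \<and> card A = k}"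
    then have "finite A" using Cons.prems(1) finite_subset by blast
    then have "card (U - A) = card U - k" using A by (simp add: card_Diff_subset)
    moreover have "\<forall>a\<in>A. 0 < a" using A Cons.prems(2) by blast
    ultimately show "card {ys \<in> signed_arrangements A. sorted_wrt (<) ys} *
        card {zs \<in> signed_arrangements (U - A). descents_within (Dcomp ks) zs} =
        2 ^ k * (2 ^ (card U - k) * multinom ks)"
      using A Cons card_sorted_signed_arrangements[OF \<open>finite A\<close>] by simp
  qed
  also have "\<dots> = (card U choose k) * (2 ^ k * 2 ^ (card U - k)) * multinom ks"
    by (simp add: n_subsets[OF Cons.prems(1)])
  also have "\<dots> = 2 ^ card U * multinom (k # ks)"
    using Cons.prems(3) k by (simp add: multinom_Cons flip: power_add)
  finally show ?case .
qed

section \<open>The type D descent condition\<close>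

(* No descent at position 0 means \<open>w(0) = -w(2) < w(1)\<close>, i.e. \<open>0 < w(1) + w(2)\<close>. *)
definition descentsD_within :: "nat set \<Rightarrow> int list \<Rightarrow> bool" where
  "descentsD_within S xs \<longleftrightarrow> descents_within S xs \<and> (0 \<notin> S \<longrightarrow> 0 < xs ! 0 + xs ! 1)"

definition negate_hd :: "int list \<Rightarrow> int list" where
  "negate_hd xs = (case xs of [] \<Rightarrow> [] | x # r \<Rightarrow> - x # r)"

lemma negate_hd_Cons [simp]: "negate_hd (x # r) = - x # r"
  by (simp add: negate_hd_def)

lemma negate_hd_negate_hd [simp]: "negate_hd (negate_hd xs) = xs"
  by (cases xs) (simp_all add: negate_hd_def)

lemma negate_hd_in_signed_arrangements:
  "xs \<in> signed_arrangements U \<Longrightarrow> negate_hd xs \<in> signed_arrangements U"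
  by (cases xs) (auto simp: signed_arrangements_def negate_hd_def)

lemma card_signed_arrangements_negate_hd:
  "card {xs \<in> signed_arrangements U. P (negate_hd xs)} = card {xs \<in> signed_arrangements U. P xs}"
proof (rule bij_betw_same_card[of negate_hd])
  show "bij_betw negate_hd {xs \<in> signed_arrangements U. P (negate_hd xs)}
      {xs \<in> signed_arrangements U. P xs}"
    by (rule bij_betw_byWitness[where f' = negate_hd])
      (auto simp: negate_hd_in_signed_arrangements intro!: image_eqI[of _ negate_hd])
qed

lemma descents_within_insert_1_Cons:
  "descents_within (insert 1 S) (x # xs) \<longleftrightarrow> descents_within (insert 1 S) (y # xs)"
proof -
  have "(x # xs) ! i = (y # xs) ! i \<and> (x # xs) ! Suc i = (y # xs) ! Suc i"
    if "Suc i \<notin> insert 1 S" for i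
    using that by (cases i) simp_all
  then show ?thesis
    unfolding descents_within_def by (metis length_Cons)
qed

lemma descents_within_iff_insert_1:
  "descents_within S (x # y # r) \<longleftrightarrow>
    descents_within (insert 1 S) (x # y # r) \<and> (1 \<notin> S \<longrightarrow> x < y)"
proof
  assume "descents_within S (x # y # r)"
  then show "descents_within (insert 1 S) (x # y # r) \<and> (1 \<notin> S \<longrightarrow> x < y)"
    by (auto simp: descents_within_def)
next
  assume H: "descents_within (insert 1 S) (x # y # r) \<and> (1 \<notin> S \<longrightarrow> x < y)"
  show "descents_within S (x # y # r)"
    unfolding descents_within_def
  proof (intro allI impI)
    fix i assume "Suc i < length (x # y # r)" "Suc i \<notin> S"
    with H show "(x # y # r) ! i < (x # y # r) ! Suc i"
      by (cases "i = 0") (auto simp: descents_within_def)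
  qed
qed

lemma descentsD_within_insert_1_iff:
  assumes "2 \<le> length xs" and "0 \<notin> S" and "1 \<notin> S"
  shows "descentsD_within (insert 1 S) xs \<longleftrightarrow> descents_within S (negate_hd xs)"
proof -
  obtain x y r where xs: "xs = x # y # r"
    using assms(1) by (metis One_nat_def Suc_1 Suc_le_length_iff)
  show ?thesis
    using assms(2,3) descents_within_insert_1_Cons[of S x "y # r" "- x"]
    by (simp add: xs descentsD_within_def descents_within_iff_insert_1[of S "- x"])
      linarith
qed

lemma card_descentsD_within_Dcomp_0:
  fixes U :: "int set"
  assumes "finite U" and "\<forall>a\<in>U. 0 < a" and "sum_list ks = card U" and "ks \<noteq> []"
  shows "card {xs \<in> signed_arrangements U. descentsD_within (Dcomp (0 # ks)) xs} =
    2 ^ card U * multinom ks"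
  using card_descents_within_Dcomp[OF assms(1-3)] assms(4)
  by (simp add: descentsD_within_def Dcomp_Cons descents_within_insert_0)

lemma card_descentsD_within_Dcomp_1:
  fixes U :: "int set"
  assumes "finite U" and "\<forall>a\<in>U. 0 < a" and "1 + b + sum_list ks = card U" and "0 < b"
  shows "card {xs \<in> signed_arrangements U. descentsD_within (Dcomp (1 # b # ks)) xs} =
    2 ^ card U * multinom ((1 + b) # ks)"
proof -
  let ?S = "Dcomp ((1 + b) # ks)"
  have S: "0 \<notin> ?S" "1 \<notin> ?S" using Dcomp_Cons_ge[of _ "1 + b" ks] assms(4) by force+
  have "descentsD_within (Dcomp (1 # b # ks)) xs \<longleftrightarrow> descents_within ?S (negate_hd xs)"
    if "xs \<in> signed_arrangements U" for xs
  proof -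
    have "2 \<le> length xs"
      using length_signed_arrangement[OF that] assms(3,4) by simp
    then show ?thesis
      unfolding Dcomp_Cons_Cons by (rule descentsD_within_insert_1_iff[OF _ S])
  qed
  then have "{xs \<in> signed_arrangements U. descentsD_within (Dcomp (1 # b # ks)) xs} =
      {xs \<in> signed_arrangements U. descents_within ?S (negate_hd xs)}"
    by blast
  then show ?thesis
    using card_signed_arrangements_negate_hd[of U "descents_within ?S"]
      card_descents_within_Dcomp[OF assms(1,2), of "(1 + b) # ks"] assms(3)
    by simp
qed

lemma descentsD_within_Dcomp_Cons:
  assumes "length xs = k + sum_list ks" and "2 \<le> k"
  shows "descentsD_within (Dcomp (k # ks)) xs \<longleftrightarrow>
    (sorted_wrt (<) (take k xs) \<and> 0 < take k xs ! 0 + take k xs ! 1) \<and>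
    descents_within (Dcomp ks) (drop k xs)"
proof -
  have "0 \<notin> Dcomp (k # ks)" using Dcomp_Cons_ge[of 0 k ks] assms(2) by auto
  then show ?thesis
    using assms by (auto simp: descentsD_within_def descents_within_Dcomp_Cons)
qed

lemma card_descentsD_within_Dcomp_ge_2:
  fixes U :: "int set"
  assumes "finite U" and "\<forall>a\<in>U. 0 < a" and "k + sum_list ks = card U" and "2 \<le> k"
  shows "card {xs \<in> signed_arrangements U. descentsD_within (Dcomp (k # ks)) xs} =
    (card U choose k) * 2 * 2 ^ (card U - k) * multinom ks"
proof -
  have k: "k \<le> card U" using assms(3) by simp
  have "card {xs \<in> signed_arrangements U. descentsD_within (Dcomp (k # ks)) xs} =
      card {xs \<in> signed_arrangements U.
        (sorted_wrt (<) (take k xs) \<and> 0 < take k xs ! 0 + take k xs ! 1) \<and>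
        descents_within (Dcomp ks) (drop k xs)}"
    using descentsD_within_Dcomp_Cons[OF _ assms(4)] length_signed_arrangement assms(3)
    by (metis (no_types, lifting))
  also have "\<dots> = (\<Sum>A | A \<subseteq> U \<and> card A = k.
      card {ys \<in> signed_arrangements A. sorted_wrt (<) ys \<and> 0 < ys ! 0 + ys ! 1} *
      card {zs \<in> signed_arrangements (U - A). descents_within (Dcomp ks) zs})"
    by (rule card_signed_arrangements_split[OF assms(1) k])
  also have "\<dots> = (\<Sum>A | A \<subseteq> U \<and> card A = k. 2 * (2 ^ (card U - k) * multinom ks))"
  proof (rule sum.cong[OF refl])
    fix A assume A: "A \<in> {A. A \<subseteq> U \<and> card A = k}"
    then have "finite A" using assms(1) finite_subset by blast
    moreover have "card (U - A) = card U - k" using A \<open>finite A\<close> by (simp add: card_Diff_subset)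
    moreover have "\<forall>a\<in>A. 0 < a" "\<forall>a\<in>U - A. 0 < a" using A assms(2) by blast+
    ultimately show "card {ys \<in> signed_arrangements A. sorted_wrt (<) ys \<and> 0 < ys ! 0 + ys ! 1} *
        card {zs \<in> signed_arrangements (U - A). descents_within (Dcomp ks) zs} =
        2 * (2 ^ (card U - k) * multinom ks)"
      using A assms(1,3,4) card_sorted_signed_arrangements_pos_first_sum
        card_descents_within_Dcomp[of "U - A" ks] by simp
  qed
  also have "\<dots> = (card U choose k) * 2 * 2 ^ (card U - k) * multinom ks"
    by (simp add: n_subsets[OF assms(1)])
  finally show ?thesis .
qed

lemma card_descentsD_within_Dcomp:
  fixes U :: "int set"
  assumes "finite U" and "\<forall>a\<in>U. 0 < a" and "2 \<le> card U" and "pseudo_comp (card U) \<beta>"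
  shows "card {xs \<in> signed_arrangements U. descentsD_within (Dcomp \<beta>) xs} = 2 * nu (card U) \<beta>"
proof -
  obtain k ks where \<beta>: "\<beta> = k # ks" and sum: "k + sum_list ks = card U"
    and pos: "\<forall>x\<in>set ks. 0 < x"
    using assms(4) by (cases \<beta>) (auto simp: pseudo_comp_def)
  have two_pow: "(2::nat) ^ card U = 2 * 2 ^ (card U - 1)"
    using assms(3) by (simp flip: power_Suc)
  consider "k = 0" | "k = 1" | "2 \<le> k" by linarith
  then show ?thesis
  proof cases
    case 1
    then have "ks \<noteq> []" using sum assms(3) by auto
    with 1 show ?thesis
      using card_descentsD_within_Dcomp_0[OF assms(1,2)] sum two_pow
      by (simp add: \<beta> nu_def multinom_Cons)
  next
    case 2
    then obtain b ks' where ks: "ks = b # ks'" using sum assms(3) by (cases ks) auto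
    with 2 show ?thesis
      using card_descentsD_within_Dcomp_1[OF assms(1,2), of b ks'] sum pos two_pow
      by (simp add: \<beta> nu_def)
  next
    case 3
    then show ?thesis
      using card_descentsD_within_Dcomp_ge_2[OF assms(1,2) sum] sum
      by (simp add: \<beta> nu_def multinom_Cons)
  qed
qed

section \<open>Signed permutations as signed words\<close>

definition signed_word :: "nat \<Rightarrow> (int \<Rightarrow> int) \<Rightarrow> int list" where
  "signed_word n w = map (\<lambda>i. w (int i)) [1..<Suc n]"

definition perm_of_signed_word :: "nat \<Rightarrow> int list \<Rightarrow> int \<Rightarrow> int" where
  "perm_of_signed_word n xs x = (if x \<in> pm_set n then sgn x * xs ! (nat \<bar>x\<bar> - 1) else x)"

lemma length_signed_word [simp]: "length (signed_word n w) = n"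
  by (simp add: signed_word_def)

lemma nth_signed_word: "i < n \<Longrightarrow> signed_word n w ! i = w (int (Suc i))"
  by (simp add: signed_word_def nth_upt del: upt_Suc)

lemma pm_set_iff: "x \<in> pm_set n \<longleftrightarrow> x \<noteq> 0 \<and> \<bar>x\<bar> \<le> int n"
  by (auto simp: pm_set_def)

lemma signed_perm_odd: "w \<in> signed_perms n \<Longrightarrow> w (- x) = - w x"
  by (cases "x \<in> pm_set n") (auto simp: signed_perms_def pm_set_iff)

lemma signed_perm_sgn_abs: "w \<in> signed_perms n \<Longrightarrow> w x = sgn x * w \<bar>x\<bar>"
  by (cases "0 < x"; cases "x = 0")
    (auto simp: signed_perm_odd[of w n "- x", symmetric] signed_perms_def pm_set_iff)

lemma signed_word_in_signed_arrangements:
  assumes w: "w \<in> signed_perms n"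
  shows "signed_word n w \<in> signed_arrangements {1..int n}"
proof -
  let ?x = "signed_word n w"
  have inj: "inj_on w (pm_set n)" and img: "w ` pm_set n = pm_set n"
    using w by (auto simp: signed_perms_def bij_betw_def)
  have "\<bar>?x ! i\<bar> \<noteq> \<bar>?x ! j\<bar>" if "i < n" "j < n" "i \<noteq> j" for i j
  proof
    assume "\<bar>?x ! i\<bar> = \<bar>?x ! j\<bar>"
    then have "w (int (Suc i)) = w (int (Suc j)) \<or> w (int (Suc i)) = w (- (int (Suc j)))"
      using that signed_perm_odd[OF w, of "int (Suc j)"] by (simp add: nth_signed_word abs_eq_iff)
    moreover have "int (Suc i) \<in> pm_set n" "int (Suc j) \<in> pm_set n" "- (int (Suc j)) \<in> pm_set n"
      using that by (auto simp: pm_set_iff)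
    ultimately have "int (Suc i) = int (Suc j) \<or> int (Suc i) = - (int (Suc j))"
      using inj by (auto dest: inj_onD)
    with \<open>i \<noteq> j\<close> show False by simp
  qed
  then have dist: "distinct (map abs ?x)"
    by (simp add: distinct_conv_nth)
  have "abs ` set ?x \<subseteq> {1..int n}"
  proof
    fix y assume "y \<in> abs ` set ?x"
    then obtain i where "i < n" "y = \<bar>w (int (Suc i))\<bar>"
      by (auto simp: in_set_conv_nth nth_signed_word)
    moreover have "w (int (Suc i)) \<in> pm_set n"
      using img \<open>i < n\<close> by (force simp: pm_set_iff)
    ultimately show "y \<in> {1..int n}" by (auto simp: pm_set_iff)
  qed
  moreover have "card (abs ` set ?x) = card {1..int n}"
    using distinct_card[OF dist] by simp
  ultimately have "abs ` set ?x = {1..int n}"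
    by (intro card_subset_eq) auto
  with dist show ?thesis by (simp add: signed_arrangements_def)
qed

lemma perm_of_signed_word_in_signed_perms:
  assumes xs: "xs \<in> signed_arrangements {1..int n}"
  shows "perm_of_signed_word n xs \<in> signed_perms n"
proof -
  let ?v = "perm_of_signed_word n xs"
  have len: "length xs = n" using length_signed_arrangement[OF xs] by simp
  have index: "nat \<bar>x\<bar> - 1 < n" if "x \<in> pm_set n" for x
    using that by (auto simp: pm_set_iff)
  have entry: "abs (xs ! (nat \<bar>x\<bar> - 1)) \<in> {1..int n}" if "x \<in> pm_set n" for x
    using xs index[OF that] len by (auto simp: signed_arrangements_def)
  have abs_v: "\<bar>?v x\<bar> = abs (xs ! (nat \<bar>x\<bar> - 1))" if "x \<in> pm_set n" for x
    using that by (simp add: perm_of_signed_word_def abs_mult abs_sgn_eq pm_set_iff)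
  have maps_to: "?v x \<in> pm_set n" if "x \<in> pm_set n" for x
    using entry[OF that] abs_v[OF that] by (auto simp: pm_set_iff)
  have "inj_on ?v (pm_set n)"
  proof (rule inj_onI)
    fix x y assume x: "x \<in> pm_set n" and y: "y \<in> pm_set n" and eq: "?v x = ?v y"
    then have "abs (xs ! (nat \<bar>x\<bar> - 1)) = abs (xs ! (nat \<bar>y\<bar> - 1))"
      using abs_v by metis
    then have "(nat \<bar>x\<bar> - 1) = (nat \<bar>y\<bar> - 1)"
      using signed_arrangement_abs_nth_neq[OF xs] index[OF x] index[OF y] len by metis
    moreover have "0 < nat \<bar>x\<bar>" "0 < nat \<bar>y\<bar>" using x y by (auto simp: pm_set_iff)
    ultimately have "nat \<bar>x\<bar> = nat \<bar>y\<bar>" by linarith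
    then have "\<bar>x\<bar> = \<bar>y\<bar>" by (simp add: eq_nat_nat_iff)
    moreover have "xs ! (nat \<bar>x\<bar> - 1) \<noteq> 0" using entry[OF x] by auto
    ultimately show "x = y"
      using eq x y by (auto simp: perm_of_signed_word_def abs_eq_iff sgn_if split: if_splits)
  qed
  moreover have "?v ` pm_set n = pm_set n"
    using calculation maps_to by (intro endo_inj_surj) (auto simp: pm_set_def)
  moreover have "?v (- x) = - ?v x" for x
    by (simp add: perm_of_signed_word_def pm_set_iff)
  ultimately show ?thesis
    by (simp add: signed_perms_def bij_betw_def perm_of_signed_word_def)
qed

lemma signed_word_perm_of_signed_word:
  assumes "xs \<in> signed_arrangements {1..int n}"
  shows "signed_word n (perm_of_signed_word n xs) = xs"
proof (rule nth_equalityI)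
  show "length (signed_word n (perm_of_signed_word n xs)) = length xs"
    using length_signed_arrangement[OF assms] by simp
  fix i assume "i < length (signed_word n (perm_of_signed_word n xs))"
  then show "signed_word n (perm_of_signed_word n xs) ! i = xs ! i"
    by (simp add: nth_signed_word perm_of_signed_word_def pm_set_iff nat_add_distrib)
qed

lemma perm_of_signed_word_signed_word:
  assumes w: "w \<in> signed_perms n"
  shows "perm_of_signed_word n (signed_word n w) = w"
proof
  fix x
  show "perm_of_signed_word n (signed_word n w) x = w x"
  proof (cases "x \<in> pm_set n")
    case True
    then have "signed_word n w ! (nat \<bar>x\<bar> - 1) = w \<bar>x\<bar>"
      by (auto simp: nth_signed_word pm_set_iff)
    with True show ?thesis
      by (simp add: perm_of_signed_word_def signed_perm_sgn_abs[OF w, of x])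
  next
    case False
    with w show ?thesis by (simp add: perm_of_signed_word_def signed_perms_def)
  qed
qed

lemma bij_betw_signed_word:
  "bij_betw (signed_word n) (signed_perms n) (signed_arrangements {1..int n})"
  by (rule bij_betw_byWitness[where f' = "perm_of_signed_word n"])
    (auto simp: perm_of_signed_word_signed_word signed_word_perm_of_signed_word
      signed_word_in_signed_arrangements perm_of_signed_word_in_signed_perms)

lemma finite_even_signed_perms: "finite (even_signed_perms n)"
  using bij_betw_finite[OF bij_betw_signed_word] finite_signed_arrangements[of "{1..int n}"]
  by (auto simp: even_signed_perms_def)

lemma descD_subset_iff:
  assumes n: "2 \<le> n" and w: "w \<in> signed_perms n"
  shows "descD n w \<subseteq> S \<longleftrightarrow> descentsD_within S (signed_word n w)"
proof -
  let ?x = "signed_word n w"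
  have neq: "\<bar>?x ! i\<bar> \<noteq> \<bar>?x ! j\<bar>" if "i < n" "j < n" "i \<noteq> j" for i j
    using signed_arrangement_abs_nth_neq[OF signed_word_in_signed_arrangements[OF w]] that by simp
  have wD_0: "wD w 0 = - ?x ! 1" and wD_Suc: "\<And>i. i < n \<Longrightarrow> wD w (Suc i) = ?x ! i"
    using n by (simp_all add: wD_def nth_signed_word)
  have "descD n w \<subseteq> S \<longleftrightarrow> (\<forall>i<n. i \<notin> S \<longrightarrow> \<not> wD w (i + 1) < wD w i)"
    by (auto simp: descD_def)
  also have "\<dots> \<longleftrightarrow> (0 \<notin> S \<longrightarrow> \<not> wD w 1 < wD w 0) \<and>
      (\<forall>j. Suc j < n \<longrightarrow> Suc j \<notin> S \<longrightarrow> \<not> wD w (Suc (Suc j)) < wD w (Suc j))"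
    using n by (cases n) (auto simp: less_Suc_eq_0_disj)
  also have "\<dots> \<longleftrightarrow> descentsD_within S ?x"
  proof -
    have "\<not> wD w 1 < wD w 0 \<longleftrightarrow> 0 < ?x ! 0 + ?x ! 1"
      using neq[of 0 1] n wD_0 wD_Suc[of 0] by auto
    moreover have "(\<forall>j. Suc j < n \<longrightarrow> Suc j \<notin> S \<longrightarrow> \<not> wD w (Suc (Suc j)) < wD w (Suc j)) \<longleftrightarrow>
        descents_within S ?x"
      unfolding descents_within_def length_signed_word
    proof (intro iff_allI)
      fix j
      have "?x ! j \<noteq> ?x ! Suc j" if "Suc j < n" using neq[of j "Suc j"] that by auto
      then show "(Suc j < n \<longrightarrow> Suc j \<notin> S \<longrightarrow> \<not> wD w (Suc (Suc j)) < wD w (Suc j)) \<longleftrightarrow>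
          (Suc j < n \<longrightarrow> Suc j \<notin> S \<longrightarrow> ?x ! j < ?x ! Suc j)"
        using wD_Suc[of j] wD_Suc[of "Suc j"] by auto
    qed
    ultimately show ?thesis by (auto simp: descentsD_within_def)
  qed
  finally show ?thesis .
qed

lemma card_negatives_signed_word:
  "card {i \<in> {1..n}. w (int i) < 0} = length (filter (\<lambda>x. x < 0) (signed_word n w))"
proof -
  have "{i \<in> {1..n}. w (int i) < 0} = Suc ` {i. i < n \<and> signed_word n w ! i < 0}"
  proof
    show "{i \<in> {1..n}. w (int i) < 0} \<subseteq> Suc ` {i. i < n \<and> signed_word n w ! i < 0}"
    proof
      fix i assume i: "i \<in> {i \<in> {1..n}. w (int i) < 0}"
      then have "i - 1 \<in> {i. i < n \<and> signed_word n w ! i < 0}"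
        by (auto simp: nth_signed_word)
      moreover have "i = Suc (i - 1)" using i by simp
      ultimately show "i \<in> Suc ` {i. i < n \<and> signed_word n w ! i < 0}" by blast
    qed
  qed (auto simp: nth_signed_word)
  then show ?thesis by (simp add: length_filter_conv_card card_image)
qed

section \<open>Even signed permutations\<close>

definition toggle_one :: "int \<Rightarrow> int" where
  "toggle_one x = (if \<bar>x\<bar> = 1 then - x else x)"

lemma toggle_one_less_iff:
  "a \<noteq> 0 \<Longrightarrow> b \<noteq> 0 \<Longrightarrow> \<bar>a\<bar> \<noteq> \<bar>b\<bar> \<Longrightarrow> toggle_one a < toggle_one b \<longleftrightarrow> a < b"
  by (auto simp: toggle_one_def abs_if split: if_splits)

lemma toggle_one_uminus: "toggle_one (- a) = - toggle_one a"
  by (simp add: toggle_one_def)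

lemma abs_toggle_one: "\<bar>toggle_one a\<bar> = \<bar>a\<bar>"
  by (simp add: toggle_one_def)

lemma toggle_one_toggle_one [simp]: "toggle_one (toggle_one x) = x"
  by (simp add: toggle_one_def)

lemma map_toggle_one_in_signed_arrangements:
  "xs \<in> signed_arrangements U \<Longrightarrow> map toggle_one xs \<in> signed_arrangements U"
proof -
  have "map abs (map toggle_one xs) = map abs xs" by (simp add: abs_toggle_one)
  then show "xs \<in> signed_arrangements U \<Longrightarrow> map toggle_one xs \<in> signed_arrangements U"
    unfolding signed_arrangements_def by (metis (mono_tags, lifting) list.set_map mem_Collect_eq)
qed

lemma descentsD_within_map_toggle_one:
  assumes xs: "xs \<in> signed_arrangements U" and "0 \<notin> U" and "2 \<le> length xs"
  shows "descentsD_within S (map toggle_one xs) \<longleftrightarrow> descentsD_within S xs"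
proof -
  have len: "0 < length xs" "1 < length xs" using assms(3) by linarith+
  have nz: "xs ! i \<noteq> 0" if "i < length xs" for i
    using signed_arrangement_nth_nonzero[OF xs \<open>0 \<notin> U\<close> that] .
  have less: "toggle_one (xs ! i) < toggle_one (xs ! j) \<longleftrightarrow> xs ! i < xs ! j"
    if "i < length xs" "j < length xs" "i \<noteq> j" for i j
    using toggle_one_less_iff nz signed_arrangement_abs_nth_neq[OF xs] that by blast
  have "0 < toggle_one (xs ! 0) + toggle_one (xs ! 1) \<longleftrightarrow> toggle_one (- xs ! 1) < toggle_one (xs ! 0)"
    by (simp add: toggle_one_uminus) linarith
  also have "\<dots> \<longleftrightarrow> - xs ! 1 < xs ! 0"
  proof (rule toggle_one_less_iff)
    show "- xs ! 1 \<noteq> 0" "xs ! 0 \<noteq> 0" "\<bar>- xs ! 1\<bar> \<noteq> \<bar>xs ! 0\<bar>"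
      using len nz signed_arrangement_abs_nth_neq[OF xs, of 1 0] by auto
  qed
  finally show ?thesis
    using len less by (auto simp: descentsD_within_def descents_within_def)
qed

lemma even_negatives_map_toggle_one:
  assumes xs: "xs \<in> signed_arrangements U" and "1 \<in> U"
  shows "even (length (filter (\<lambda>x. x < 0) (map toggle_one xs))) \<longleftrightarrow>
    odd (length (filter (\<lambda>x. x < 0) xs))"
proof -
  obtain i where i: "i < length xs" "\<bar>xs ! i\<bar> = 1"
    using xs \<open>1 \<in> U\<close> by (auto simp: signed_arrangements_def in_set_conv_nth)
  define ys zs where "ys = take i xs" and "zs = drop (Suc i) xs"
  have split: "xs = ys @ xs ! i # zs"
    unfolding ys_def zs_def by (rule id_take_nth_drop[OF i(1)])
  have "distinct (map abs (ys @ xs ! i # zs))"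
    using xs split by (simp add: signed_arrangements_def)
  then have "1 \<notin> abs ` set ys" "1 \<notin> abs ` set zs"
    using i(2) by auto
  then have "map toggle_one ys = ys" "map toggle_one zs = zs"
    by (auto simp: toggle_one_def intro!: map_idI)
  then have "map toggle_one xs = ys @ - xs ! i # zs"
    using i(2) by (subst split) (simp add: toggle_one_def)
  moreover have "xs ! i \<noteq> 0" using i(2) by auto
  ultimately show ?thesis
    by (subst (2) split) auto
qed

lemma card_even_negatives_descentsD_within:
  assumes "finite U" and "0 \<notin> U" and "1 \<in> U" and "2 \<le> card U"
  shows "2 * card {xs \<in> signed_arrangements U.
      even (length (filter (\<lambda>x. x < 0) xs)) \<and> descentsD_within S xs} =
    card {xs \<in> signed_arrangements U. descentsD_within S xs}"
proof -
  let ?neg = "\<lambda>xs. length (filter (\<lambda>x. x < 0) xs)"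
  define evens where "evens = {xs \<in> signed_arrangements U. even (?neg xs) \<and> descentsD_within S xs}"
  define odds where "odds = {xs \<in> signed_arrangements U. odd (?neg xs) \<and> descentsD_within S xs}"
  have invariant: "map toggle_one xs \<in> signed_arrangements U \<and>
      (descentsD_within S (map toggle_one xs) \<longleftrightarrow> descentsD_within S xs) \<and>
      (even (?neg (map toggle_one xs)) \<longleftrightarrow> odd (?neg xs))"
    if "xs \<in> signed_arrangements U" for xs
    using that assms(2-4) length_signed_arrangement[OF that]
      even_negatives_map_toggle_one[OF that assms(3)]
    by (simp add: map_toggle_one_in_signed_arrangements descentsD_within_map_toggle_one)
  have "bij_betw (map toggle_one) evens odds"
    by (rule bij_betw_byWitness[where f' = "map toggle_one"])
      (use invariant in \<open>auto simp: evens_def odds_def map_idI\<close>)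
  then have "card evens = card odds" by (rule bij_betw_same_card)
  moreover have "{xs \<in> signed_arrangements U. descentsD_within S xs} = evens \<union> odds"
    and "evens \<inter> odds = {}"
    by (auto simp: evens_def odds_def)
  moreover have "finite evens" "finite odds"
    using finite_signed_arrangements[OF assms(1)] by (auto simp: evens_def odds_def)
  ultimately show ?thesis by (simp add: card_Un_disjoint evens_def)
qed

lemma card_even_signed_perms_descD_subset:
  assumes "2 \<le> n"
  shows "card {w \<in> even_signed_perms n. descD n w \<subseteq> S} =
    card {xs \<in> signed_arrangements {1..int n}.
      even (length (filter (\<lambda>x. x < 0) xs)) \<and> descentsD_within S xs}"
proof -
  have "{w \<in> even_signed_perms n. descD n w \<subseteq> S} =
      {w \<in> signed_perms n. even (card {i \<in> {1..n}. w (int i) < 0}) \<and> descD n w \<subseteq> S}"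
    by (auto simp: even_signed_perms_def)
  also have "card \<dots> = card {xs \<in> signed_arrangements {1..int n}.
      even (length (filter (\<lambda>x. x < 0) xs)) \<and> descentsD_within S xs}"
  proof (rule bij_betw_same_card[of "signed_word n"],
      rule bij_betw_Collect[OF bij_betw_signed_word])
    fix w assume w: "w \<in> signed_perms n"
    show "(even (length (filter (\<lambda>x. x < 0) (signed_word n w))) \<and>
        descentsD_within S (signed_word n w)) \<longleftrightarrow>
        even (card {i \<in> {1..n}. w (int i) < 0}) \<and> descD n w \<subseteq> S"
      using descD_subset_iff[OF assms w] card_negatives_signed_word[of n w] by simp
  qed
  finally show ?thesis .
qed

lemma card_descD_subset_Dcomp:
  assumes "2 \<le> n" and "pseudo_comp n \<beta>"
  shows "card {w \<in> even_signed_perms n. descD n w \<subseteq> Dcomp \<beta>} = nu n \<beta>"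
proof -
  have U: "finite {1..int n}" "0 \<notin> {1..int n}" "1 \<in> {1..int n}" "\<forall>a\<in>{1..int n}. 0 < a"
    "card {1..int n} = n"
    using assms(1) by auto
  have "2 * card {w \<in> even_signed_perms n. descD n w \<subseteq> Dcomp \<beta>} =
      card {xs \<in> signed_arrangements {1..int n}. descentsD_within (Dcomp \<beta>) xs}"
    using card_even_signed_perms_descD_subset[OF assms(1)]
      card_even_negatives_descentsD_within[OF U(1-3)] assms(1) U(5) by simp
  also have "\<dots> = 2 * nu n \<beta>"
    using card_descentsD_within_Dcomp[OF U(1,4)] assms U(5) by simp
  finally show ?thesis by simp
qed

section \<open>Moebius inversion\<close>

lemma card_fiber_inclusion_exclusion:
  fixes d :: "'a \<Rightarrow> 'b set"
  assumes "finite X" and "finite S"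
  shows "int (card {x \<in> X. d x = S}) =
    (\<Sum>T\<in>Pow S. (-1) ^ (card S - card T) * int (card {x \<in> X. d x \<subseteq> T}))"
proof (rule inclusion_exclusion_mobius[OF _ assms(2)])
  fix T :: "'b set" assume "finite T"
  have "{x \<in> X. d x \<subseteq> T} = (\<Union>U\<in>Pow T. {x \<in> X. d x = U})" by auto
  then have "card {x \<in> X. d x \<subseteq> T} = (\<Sum>U\<in>Pow T. card {x \<in> X. d x = U})"
    using \<open>finite T\<close> assms(1) by (auto intro: card_UN_disjoint)
  then show "int (card {x \<in> X. d x \<subseteq> T}) = (\<Sum>U\<in>Pow T. int (card {x \<in> X. d x = U}))"
    by simp
qed

theorem proposition5p1:
  fixes n :: nat and \<alpha> :: "nat list"
  assumes "n \<ge> 4" and "pseudo_comp n \<alpha>"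
  shows "int (ribbonD n \<alpha>) =
    (\<Sum>\<beta>\<in>{\<beta>. pseudo_comp n \<beta> \<and> Dcomp \<beta> \<subseteq> Dcomp \<alpha>}.
        (-1::int) ^ (length \<alpha> - length \<beta>) * int (nu n \<beta>))"
proof -
  let ?E = "even_signed_perms n" and ?D = "Dcomp \<alpha>"
  have D: "?D \<subseteq> {0..<n}" using Dcomp_subset[OF assms(2)] .
  then have "int (ribbonD n \<alpha>) =
      (\<Sum>T\<in>Pow ?D. (-1) ^ (card ?D - card T) * int (card {w \<in> ?E. descD n w \<subseteq> T}))"
    unfolding ribbonD_def using finite_even_signed_perms
    by (intro card_fiber_inclusion_exclusion) (auto dest: finite_subset)
  also have "\<dots> = (\<Sum>\<beta>\<in>{\<beta>. pseudo_comp n \<beta> \<and> Dcomp \<beta> \<subseteq> ?D}.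
      (-1) ^ (card ?D - card (Dcomp \<beta>)) * int (card {w \<in> ?E. descD n w \<subseteq> Dcomp \<beta>}))"
    by (rule sum.reindex_bij_betw[OF bij_betw_Dcomp[OF D], symmetric])
  also have "\<dots> = (\<Sum>\<beta>\<in>{\<beta>. pseudo_comp n \<beta> \<and> Dcomp \<beta> \<subseteq> ?D}.
      (-1) ^ (length \<alpha> - length \<beta>) * int (nu n \<beta>))"
    using assms card_Dcomp_diff[OF assms(2)] card_descD_subset_Dcomp
    by (intro sum.cong) auto
  finally show ?thesis .
qed

end
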